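(* Let $d\ge 2$ and $E,F\subset\mathbb F_q^d$. Then $$\sum_{t\in\mathbb F_q}\nu^2(t)\leq \frac{|E|^2|F|^2}{q}+q^{3d}\sum_{r\in\mathbb F_q}\Big|\sum_{m\in S_r}\overline{\widehat E(m)}\widehat F(m)\Big|^2.$$
   Context: $\mathbb F_q$ is a finite field of characteristic greater than two, and $\chi$ is a fixed nontrivial additive character of $\mathbb F_q$. For $f:\mathbb F_q^d\to\mathbb C$, $\widehat f(m)=q^{-d}\sum_{x\in\mathbb F_q^d}\chi(-m\cdot x)f(x)$; sets are identified with their indicator functions. For $m\in\mathbb F_q^d$, $\|m\|=m_1^2+\dots+m_d^2$; $S_r=\{x\in\mathbb F_q^d:\|x\|=r\}$. $\nu(t)=|\{(x,y)\in E\times F:\|x-y\|=t\}|$. *)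

theory Defs
  imports "HOL-Analysis.Analysis"
begin

text \<open>Finite field F_q is modelled as a type 'a of class {finite, field};
  q = CARD('a). Vectors in F_q^d are 'a^'n with d = CARD('n).\<close>

definition additive_character :: "('a::{finite,field} \<Rightarrow> complex) \<Rightarrow> bool" where
  "additive_character chr \<longleftrightarrow>
     (\<forall>x y. chr (x + y) = chr x * chr y) \<and> (\<forall>x. cmod (chr x) = 1)"

definition nontrivial_character :: "('a::{finite,field} \<Rightarrow> complex) \<Rightarrow> bool" where
  "nontrivial_character chr \<longleftrightarrow> (\<exists>x. chr x \<noteq> 1)"

definition dotp :: "'a::{finite,field}^'n \<Rightarrow> 'a^'n \<Rightarrow> 'a" where
  "dotp m x = (\<Sum>i\<in>UNIV. m $ i * x $ i)"

definition qnorm :: "'a::{finite,field}^'n \<Rightarrow> 'a" where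
  "qnorm m = (\<Sum>i\<in>UNIV. (m $ i)^2)"

definition sphere_q :: "'a::{finite,field} \<Rightarrow> ('a^'n) set" where
  "sphere_q r = {x. qnorm x = r}"

definition indic :: "('a::{finite,field}^'n) set \<Rightarrow> 'a^'n \<Rightarrow> complex" where
  "indic E x = (if x \<in> E then 1 else 0)"

definition fhat :: "('a::{finite,field} \<Rightarrow> complex) \<Rightarrow> ('a^'n \<Rightarrow> complex) \<Rightarrow> 'a^'n \<Rightarrow> complex" where
  "fhat chr f m = (1 / of_nat (CARD('a) ^ CARD('n))) * (\<Sum>x\<in>UNIV. chr (- dotp m x) * f x)"

definition dist_count :: "('a::{finite,field}^'n) set \<Rightarrow> ('a^'n) set \<Rightarrow> 'a \<Rightarrow> nat" where
  "dist_count E F t = card {(x, y). x \<in> E \<and> y \<in> F \<and> qnorm (x - y) = t}"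

end

theory Submission
  imports Defs
begin

(* Writing the indicator of \<parallel>x - y\<parallel> = t as a character sum shows that \<nu>(t) is, up to the
   factor 1/q, the Fourier transform in t of P(s) = \<Sum>x,y E(x) F(y) \<chi>(s \<parallel>x - y\<parallel>), so
   \<Sum>t \<nu>(t)\<^sup>2 = q\<^sup>-\<^sup>1 \<Sum>s |P(s)|\<^sup>2 by Parseval. The term s = 0 is |E|\<^sup>2 |F|\<^sup>2.
   For s = -1/(4u), u \<noteq> 0, expanding \<chi>(s \<parallel>x - y\<parallel>) on the Fourier side and completing the
   square identifies P(s) with q\<^sup>2\<^sup>d / G(u) times \<Sum>r \<chi>(r u) A(r), where
   A(r) = \<Sum>m\<in>S_r conj(E^(m)) F^(m) and G(u) is a Gauss sum with |G(u)|\<^sup>2 = q\<^sup>d.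
   Parseval in u then bounds the terms s \<noteq> 0 by q\<^sup>3\<^sup>d\<^sup>+\<^sup>1 \<Sum>r |A(r)|\<^sup>2. *)

lemma sum_UNIV_translate:
  fixes a :: "'b::{finite,group_add}"
  shows "(\<Sum>x\<in>UNIV. f x) = (\<Sum>x\<in>UNIV. f (x + a))"
  by (rule sum.reindex_bij_witness[of _ "\<lambda>x. x + a" "\<lambda>x. x - a"]) auto

lemma sum_UNIV_uminus:
  fixes f :: "'b::{finite,group_add} \<Rightarrow> _"
  shows "(\<Sum>x\<in>UNIV. f x) = (\<Sum>x\<in>UNIV. f (- x))"
  by (rule sum.reindex_bij_witness[of _ uminus uminus]) auto

lemma dotp_commute: "dotp x y = dotp y x"
  by (simp add: dotp_def mult.commute)

lemma dotp_add_left: "dotp (x + y) z = dotp x z + dotp y z"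
  by (simp add: dotp_def distrib_right sum.distrib)

lemma dotp_add_right: "dotp x (y + z) = dotp x y + dotp x z"
  by (simp add: dotp_def distrib_left sum.distrib)

lemma dotp_diff_right: "dotp x (y - z) = dotp x y - dotp x z"
  by (simp add: dotp_def right_diff_distrib sum_subtractf)

lemma dotp_scale_left: "dotp (c *s x) y = c * dotp x y"
  by (simp add: dotp_def sum_distrib_left mult.assoc)

lemma dotp_scale_right: "dotp x (c *s y) = c * dotp x y"
  by (simp add: dotp_def sum_distrib_left mult.left_commute)

lemma qnorm_eq_dotp: "qnorm x = dotp x x"
  by (simp add: qnorm_def dotp_def power2_eq_square)

lemma qnorm_add: "qnorm (x + y) = qnorm x + qnorm y + 2 * dotp x y"
  by (simp add: qnorm_eq_dotp dotp_add_left dotp_add_right dotp_commute[of y x])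

lemma qnorm_scale: "qnorm (c *s x) = c^2 * qnorm x"
  by (simp add: qnorm_def power_mult_distrib sum_distrib_left)

lemma of_nat_dist_count:
  "of_nat (dist_count E F t)
   = (\<Sum>x\<in>UNIV. \<Sum>y\<in>UNIV. indic E x * indic F y * (if qnorm (x - y) = t then 1 else 0))"
proof -
  let ?S = "{(x, y). x \<in> E \<and> y \<in> F \<and> qnorm (x - y) = t}"
  have "of_nat (card ?S) = (\<Sum>p\<in>UNIV. if p \<in> ?S then 1 else 0 :: complex)"
    by (simp add: sum.If_cases)
  also have "\<dots> = (\<Sum>x\<in>UNIV. \<Sum>y\<in>UNIV. if (x, y) \<in> ?S then 1 else 0)"
    by (simp add: sum.cartesian_product UNIV_Times_UNIV[symmetric] split_beta del: UNIV_Times_UNIV)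
  finally show ?thesis
    by (auto simp: dist_count_def indic_def intro!: sum.cong)
qed

lemma sum_indic: "(\<Sum>x\<in>UNIV. indic E x) = of_nat (card E)"
  by (simp add: indic_def sum.If_cases)

lemma cnj_indic: "cnj (indic E x) = indic E x"
  by (simp add: indic_def)

locale nontrivial_additive_character =
  fixes chr :: "'a::{finite,field} \<Rightarrow> complex"
  assumes chr_add: "\<And>x y. chr (x + y) = chr x * chr y"
    and norm_chr: "\<And>x. cmod (chr x) = 1"
    and chr_nontrivial: "\<exists>x. chr x \<noteq> 1"
begin

lemma chr_zero: "chr 0 = 1"
proof -
  have "chr 0 * chr 0 = chr 0 * 1" using chr_add[of 0 0] by simp
  moreover have "chr 0 \<noteq> 0" using norm_chr[of 0] by auto
  ultimately show ?thesis by (metis mult_left_cancel)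
qed

lemma chr_uminus: "chr (- a) = cnj (chr a)"
proof -
  have "chr a * chr (- a) = chr a * cnj (chr a)"
    using chr_add[of a "- a"] chr_zero complex_norm_square[of "chr a"] norm_chr[of a] by simp
  moreover have "chr a \<noteq> 0" using norm_chr[of a] by auto
  ultimately show ?thesis by (metis mult_left_cancel)
qed

lemma chr_diff: "chr (a - b) = chr a * cnj (chr b)"
  using chr_add[of a "- b"] chr_uminus[of b] by simp

lemma eq_zero_if_chr_invariant:
  assumes "\<And>b. z = chr b * z"
  shows "z = 0"
proof -
  obtain b where "chr b \<noteq> 1" using chr_nontrivial by blast
  moreover have "(1 - chr b) * z = 0" using assms[of b] by (simp add: algebra_simps)
  ultimately show ?thesis by simp
qed

lemma sum_chr_mult: "(\<Sum>t\<in>UNIV. chr (a * t)) = (if a = 0 then of_nat CARD('a) else 0)"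
proof (cases "a = 0")
  case False
  have "(\<Sum>t\<in>UNIV. chr (a * t)) = chr b * (\<Sum>t\<in>UNIV. chr (a * t))" for b
  proof -
    have "(\<Sum>t\<in>UNIV. chr (a * t)) = (\<Sum>t\<in>UNIV. chr (a * (t + b / a)))"
      by (rule sum_UNIV_translate)
    also have "\<dots> = chr b * (\<Sum>t\<in>UNIV. chr (a * t))"
      using False by (simp add: distrib_left chr_add sum_distrib_left mult.commute)
    finally show ?thesis .
  qed
  with False show ?thesis using eq_zero_if_chr_invariant by simp
qed (simp add: chr_zero)

lemma sum_chr_dotp:
  "(\<Sum>x\<in>UNIV. chr (dotp w (x::'a^'n))) = (if w = 0 then of_nat (CARD('a) ^ CARD('n)) else 0)"
proof (cases "w = 0")
  case False
  then obtain i where i: "w $ i \<noteq> 0" by (metis vec_eq_iff zero_index)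
  have "(\<Sum>x\<in>UNIV. chr (dotp w x)) = chr b * (\<Sum>x\<in>UNIV. chr (dotp w (x::'a^'n)))" for b
  proof -
    define v where "v = axis i (b / w $ i)"
    have "dotp w v = b"
      using i by (simp add: v_def dotp_def axis_def if_distrib cong: if_cong)
    have "(\<Sum>x\<in>UNIV. chr (dotp w x)) = (\<Sum>x\<in>UNIV. chr (dotp w (x + v)))"
      by (rule sum_UNIV_translate)
    also have "\<dots> = chr b * (\<Sum>x\<in>UNIV. chr (dotp w x))"
      using \<open>dotp w v = b\<close>
      by (simp add: dotp_def distrib_left sum.distrib chr_add sum_distrib_left mult.commute)
    finally show ?thesis .
  qed
  with False show ?thesis using eq_zero_if_chr_invariant by simp
qed (simp add: dotp_def chr_zero)

lemma parseval:
  fixes c :: "'a \<Rightarrow> complex"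
  shows "(\<Sum>t\<in>UNIV. (cmod (\<Sum>s\<in>UNIV. chr (s * t) * c s))^2)
       = real CARD('a) * (\<Sum>s\<in>UNIV. (cmod (c s))^2)"
proof -
  have "complex_of_real (\<Sum>t\<in>UNIV. (cmod (\<Sum>s\<in>UNIV. chr (s * t) * c s))^2)
      = (\<Sum>t\<in>UNIV. \<Sum>s\<in>UNIV. \<Sum>s'\<in>UNIV. (chr (s * t) * c s) * cnj (chr (s' * t) * c s'))"
    by (simp only: of_real_sum complex_norm_square cnj_sum sum_product)
  also have "\<dots> = (\<Sum>t\<in>UNIV. \<Sum>s\<in>UNIV. \<Sum>s'\<in>UNIV. c s * cnj (c s') * chr ((s - s') * t))"
    by (intro sum.cong refl) (simp add: left_diff_distrib right_diff_distrib chr_diff mult_ac)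
  also have "\<dots> = (\<Sum>s\<in>UNIV. \<Sum>t\<in>UNIV. \<Sum>s'\<in>UNIV. c s * cnj (c s') * chr ((s - s') * t))"
    by (rule sum.swap)
  also have "\<dots> = (\<Sum>s\<in>UNIV. \<Sum>s'\<in>UNIV. c s * cnj (c s') * (\<Sum>t\<in>UNIV. chr ((s - s') * t)))"
    by (rule sum.cong[OF refl], subst sum.swap) (simp add: sum_distrib_left)
  also have "\<dots> = (\<Sum>s\<in>UNIV. c s * cnj (c s) * of_nat CARD('a))"
    by (simp add: sum_chr_mult if_distrib cong: if_cong)
  also have "\<dots> = complex_of_real (real CARD('a) * (\<Sum>s\<in>UNIV. (cmod (c s))^2))"
    by (simp add: complex_norm_square[symmetric] sum_distrib_left mult.commute)
  finally show ?thesis using of_real_eq_iff by blast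
qed

definition quadratic_pair_sum :: "('a^'n \<Rightarrow> complex) \<Rightarrow> ('a^'n \<Rightarrow> complex) \<Rightarrow> 'a \<Rightarrow> complex" where
  "quadratic_pair_sum f g s = (\<Sum>x\<in>UNIV. \<Sum>y\<in>UNIV. cnj (f x) * g y * chr (s * qnorm (x - y)))"

definition sphere_pairing :: "('a^'n \<Rightarrow> complex) \<Rightarrow> ('a^'n \<Rightarrow> complex) \<Rightarrow> 'a \<Rightarrow> complex" where
  "sphere_pairing f g r = (\<Sum>m\<in>sphere_q r. cnj (fhat chr f m) * fhat chr g m)"

lemma cnj_fhat_mult_fhat:
  "cnj (fhat chr f m) * fhat chr g m
   = (1 / of_nat (CARD('a) ^ CARD('n)))^2 * (\<Sum>x\<in>UNIV. \<Sum>y\<in>UNIV. cnj (f x) * g y * chr (dotp m (x - y)))"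
    for f g :: "'a^'n \<Rightarrow> complex"
proof -
  have "cnj (fhat chr f m) = (1 / of_nat (CARD('a) ^ CARD('n))) * (\<Sum>x\<in>UNIV. chr (dotp m x) * cnj (f x))"
    by (simp add: fhat_def cnj_sum chr_uminus[symmetric])
  then show ?thesis
    by (simp add: fhat_def sum_distrib_left sum_distrib_right dotp_diff_right chr_diff chr_uminus
        power2_eq_square mult_ac)
qed

lemma indicator_eq_sum_chr:
  "(if a = t then 1 else 0) = (1 / of_nat CARD('a)) * (\<Sum>s\<in>UNIV. chr (s * a) * chr (- (s * t)))"
proof -
  have "(\<Sum>s\<in>UNIV. chr (s * a) * chr (- (s * t))) = (\<Sum>s\<in>UNIV. chr ((a - t) * s))"
    by (simp add: chr_add[symmetric] algebra_simps)
  then show ?thesis by (simp add: sum_chr_mult)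
qed

lemma of_nat_dist_count_eq_sum_chr:
  "of_nat (dist_count E F t)
   = (1 / of_nat CARD('a)) * (\<Sum>s\<in>UNIV. chr (- (s * t)) * quadratic_pair_sum (indic E) (indic F) s)"
proof -
  let ?k = "\<lambda>x y s. indic E x * indic F y * (chr (s * qnorm (x - y)) * chr (- (s * t)))"
  have "of_nat (dist_count E F t)
      = (1 / of_nat CARD('a)) * (\<Sum>x\<in>UNIV. \<Sum>y\<in>UNIV. \<Sum>s\<in>UNIV. ?k x y s)"
    by (simp only: of_nat_dist_count indicator_eq_sum_chr) (simp add: sum_distrib_left mult_ac)
  also have "(\<Sum>x\<in>UNIV. \<Sum>y\<in>UNIV. \<Sum>s\<in>UNIV. ?k x y s) = (\<Sum>s\<in>UNIV. \<Sum>x\<in>UNIV. \<Sum>y\<in>UNIV. ?k x y s)"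
    by (subst sum.swap, rule sum.cong[OF refl], rule sum.swap)
  also have "\<dots> = (\<Sum>s\<in>UNIV. chr (- (s * t)) * quadratic_pair_sum (indic E) (indic F) s)"
    by (simp add: quadratic_pair_sum_def cnj_indic sum_distrib_left mult_ac)
  finally show ?thesis .
qed

lemma sum_dist_count_squared:
  "(\<Sum>t\<in>UNIV. (real (dist_count E F t))^2)
   = (\<Sum>s\<in>UNIV. (cmod (quadratic_pair_sum (indic E) (indic F) s))^2) / real CARD('a)"
proof -
  let ?P = "quadratic_pair_sum (indic E) (indic F)"
  have "real (dist_count E F t) = cmod (\<Sum>s\<in>UNIV. chr (s * - t) * ?P s) / real CARD('a)" for t
  proof -
    have "real (dist_count E F t) = cmod (of_nat (dist_count E F t) :: complex)"
      by simp
    then show ?thesis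
      by (simp add: of_nat_dist_count_eq_sum_chr norm_mult norm_divide)
  qed
  then have "(\<Sum>t\<in>UNIV. (real (dist_count E F t))^2)
      = (\<Sum>t\<in>UNIV. (cmod (\<Sum>s\<in>UNIV. chr (s * - t) * ?P s))^2) / (real CARD('a))^2"
    by (simp add: power_divide sum_divide_distrib)
  also have "\<dots> = (\<Sum>t\<in>UNIV. (cmod (\<Sum>s\<in>UNIV. chr (s * t) * ?P s))^2) / (real CARD('a))^2"
    by (subst sum_UNIV_uminus) simp
  also have "\<dots> = (\<Sum>s\<in>UNIV. (cmod (?P s))^2) / real CARD('a)"
    by (simp only: parseval) (simp add: power2_eq_square)
  finally show ?thesis .
qed

lemma quadratic_pair_sum_indic_zero:
  "quadratic_pair_sum (indic E) (indic F) 0 = of_nat (card E * card F)"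
proof -
  have "quadratic_pair_sum (indic E) (indic F) 0 = (\<Sum>x\<in>UNIV. indic E x) * (\<Sum>y\<in>UNIV. indic F y)"
    by (simp add: quadratic_pair_sum_def cnj_indic chr_zero sum_product)
  then show ?thesis by (simp add: sum_indic)
qed

end

locale odd_char_additive_character = nontrivial_additive_character chr
  for chr :: "'a::{finite,field} \<Rightarrow> complex" +
  assumes two_nonzero: "(2::'a) \<noteq> 0"
begin

lemma four_nonzero: "(4::'a) \<noteq> 0"
  using two_nonzero by (metis mult_2 mult_eq_0_iff numeral_Bit0 one_add_one)

lemma norm_gauss_sum_squared:
  assumes "c \<noteq> 0"
  shows "(cmod (\<Sum>x\<in>(UNIV::('a^'n) set). chr (c * qnorm x)))^2 = real CARD('a) ^ CARD('n)"
proof -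
  let ?G = "\<Sum>x\<in>(UNIV::('a^'n) set). chr (c * qnorm x)"
  \<comment> \<open>Substituting \<open>x = h + y\<close> makes the phase linear in \<open>y\<close>.\<close>
  have shift: "chr (c * qnorm (h + y)) * cnj (chr (c * qnorm y))
      = chr (c * qnorm h) * chr (dotp ((2 * c) *s h) y)" for y h :: "'a^'n"
  proof -
    have "c * qnorm (h + y) - c * qnorm y = c * qnorm h + dotp ((2 * c) *s h) y"
      by (simp add: qnorm_add dotp_scale_left algebra_simps)
    then show ?thesis by (metis chr_add chr_diff)
  qed
  have "complex_of_real ((cmod ?G)^2) = (\<Sum>x\<in>UNIV. \<Sum>y\<in>UNIV. chr (c * qnorm (x::'a^'n)) * cnj (chr (c * qnorm (y::'a^'n))))"
    by (simp only: complex_norm_square cnj_sum sum_product)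
  also have "\<dots> = (\<Sum>y\<in>UNIV. \<Sum>x\<in>UNIV. chr (c * qnorm (x::'a^'n)) * cnj (chr (c * qnorm (y::'a^'n))))"
    by (rule sum.swap)
  also have "\<dots> = (\<Sum>y\<in>UNIV. \<Sum>h\<in>UNIV. chr (c * qnorm (h + y)) * cnj (chr (c * qnorm (y::'a^'n))))"
    by (intro sum.cong refl sum_UNIV_translate)
  also have "\<dots> = (\<Sum>h\<in>UNIV. chr (c * qnorm h) * (\<Sum>y\<in>UNIV. chr (dotp ((2 * c) *s h) (y::'a^'n))))"
    by (simp only: shift sum_distrib_left) (rule sum.swap)
  also have "\<dots> = (\<Sum>h::'a^'n\<in>UNIV. if h = 0 then of_nat (CARD('a) ^ CARD('n)) else 0)"
    using assms two_nonzero by (intro sum.cong refl) (simp add: sum_chr_dotp chr_zero qnorm_def)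
  also have "\<dots> = complex_of_real (real CARD('a) ^ CARD('n))"
    by simp
  finally show ?thesis using of_real_eq_iff by blast
qed

lemma sum_chr_quadratic_complete_square:
  assumes "u \<noteq> 0"
  shows "(\<Sum>m\<in>UNIV. chr (u * qnorm m + dotp m (z::'a^'n)))
       = (\<Sum>m\<in>UNIV. chr (u * qnorm (m::'a^'n))) * chr (- qnorm z / (4 * u))"
proof -
  define a where "a = - 1 / (2 * u)"
  define k where "k = a *s z"
  have ua: "2 * u * a = - 1"
    using assms two_nonzero by (simp add: a_def)
  have "4 * u * (u * a^2 + a) = (2 * u * a)^2 + 2 * (2 * u * a)"
    by (simp add: algebra_simps power2_eq_square)
  also have "\<dots> = - 1"
    by (simp only: ua) simp
  finally have "u * a^2 + a = - 1 / (4 * u)"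
    using assms four_nonzero by (simp add: field_simps)
  moreover have "2 * u * a + 1 = 0"
    using ua by simp
  moreover have "u * qnorm (m + k) + dotp (m + k) z
      = u * qnorm m + (u * a^2 + a) * qnorm z + (2 * u * a + 1) * dotp m z" for m
    by (simp add: k_def qnorm_add qnorm_scale dotp_add_left dotp_scale_left dotp_scale_right
        qnorm_eq_dotp[symmetric] algebra_simps)
  ultimately have square: "u * qnorm (m + k) + dotp (m + k) z = u * qnorm m + - qnorm z / (4 * u)" for m
    by simp
  have "(\<Sum>m\<in>UNIV. chr (u * qnorm m + dotp m z)) = (\<Sum>m\<in>UNIV. chr (u * qnorm (m + k) + dotp (m + k) z))"
    by (rule sum_UNIV_translate)
  also have "\<dots> = (\<Sum>m\<in>UNIV. chr (u * qnorm (m::'a^'n))) * chr (- qnorm z / (4 * u))"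
    by (simp only: square chr_add sum_distrib_right)
  finally show ?thesis .
qed

lemma sum_chr_mult_sphere_pairing:
  fixes f g :: "'a^'n \<Rightarrow> complex"
  assumes "u \<noteq> 0"
  shows "(\<Sum>r\<in>UNIV. chr (r * u) * sphere_pairing f g r)
       = (\<Sum>m\<in>UNIV. chr (u * qnorm (m::'a^'n))) * (1 / of_nat (CARD('a) ^ CARD('n)))^2
         * quadratic_pair_sum f g (- 1 / (4 * u))"
proof -
  let ?c = "(1 / of_nat (CARD('a) ^ CARD('n)) :: complex)^2"
  let ?G = "\<Sum>m\<in>UNIV. chr (u * qnorm (m::'a^'n))"
  let ?k = "\<lambda>m x y. cnj (f x) * g y * chr (u * qnorm m + dotp m (x - y))"
  have "(\<Sum>r\<in>UNIV. chr (r * u) * sphere_pairing f g r)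
      = (\<Sum>r\<in>UNIV. \<Sum>m\<in>{m. m \<in> UNIV \<and> qnorm m = r}. chr (u * qnorm m) * (cnj (fhat chr f m) * fhat chr g m))"
    by (simp add: sphere_pairing_def sphere_q_def sum_distrib_left mult.commute)
  also have "\<dots> = (\<Sum>m\<in>UNIV. chr (u * qnorm m) * (cnj (fhat chr f m) * fhat chr g m))"
    by (rule sum.group) auto
  also have "\<dots> = ?c * (\<Sum>m\<in>UNIV. \<Sum>x\<in>UNIV. \<Sum>y\<in>UNIV. ?k m x y)"
    by (simp only: cnj_fhat_mult_fhat) (simp add: sum_distrib_left chr_add mult_ac)
  also have "(\<Sum>m\<in>UNIV. \<Sum>x\<in>UNIV. \<Sum>y\<in>UNIV. ?k m x y) = (\<Sum>x\<in>UNIV. \<Sum>y\<in>UNIV. \<Sum>m\<in>UNIV. ?k m x y)"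
    by (subst sum.swap, rule sum.cong[OF refl], rule sum.swap)
  also have "\<dots> = (\<Sum>x\<in>UNIV. \<Sum>y\<in>UNIV. cnj (f x) * g y * (?G * chr (- qnorm (x - y) / (4 * u))))"
    by (simp add: sum_distrib_left[symmetric] sum_chr_quadratic_complete_square[OF assms])
  also have "?c * \<dots> = ?G * ?c * quadratic_pair_sum f g (- 1 / (4 * u))"
    by (simp add: quadratic_pair_sum_def sum_distrib_left mult_ac)
  finally show ?thesis .
qed

lemma norm_quadratic_pair_sum_squared:
  fixes f g :: "'a^'n \<Rightarrow> complex"
  assumes "u \<noteq> 0"
  shows "(cmod (quadratic_pair_sum f g (- 1 / (4 * u))))^2
       = real CARD('a) ^ (3 * CARD('n)) * (cmod (\<Sum>r\<in>UNIV. chr (r * u) * sphere_pairing f g r))^2"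
proof -
  define N where "N = real CARD('a) ^ CARD('n)"
  have "N > 0" by (simp add: N_def)
  have "(cmod (\<Sum>r\<in>UNIV. chr (r * u) * sphere_pairing f g r))^2
      = (cmod (\<Sum>m\<in>UNIV. chr (u * qnorm (m::'a^'n))))^2 * ((1 / N)^2)^2
        * (cmod (quadratic_pair_sum f g (- 1 / (4 * u))))^2"
    by (simp add: sum_chr_mult_sphere_pairing[OF assms] norm_mult norm_divide norm_power
        power_mult_distrib N_def)
  also have "\<dots> = (cmod (quadratic_pair_sum f g (- 1 / (4 * u))))^2 / N^3"
    using \<open>N > 0\<close> by (simp only: norm_gauss_sum_squared[OF assms] N_def[symmetric])
      (simp add: field_simps power2_eq_square power3_eq_cube)
  finally show ?thesis
    using \<open>N > 0\<close> by (simp add: N_def power_mult[symmetric] mult.commute[of 3])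
qed

lemma sum_norm_quadratic_pair_sum_nonzero_le:
  fixes f g :: "'a^'n \<Rightarrow> complex"
  shows "(\<Sum>s\<in>UNIV - {0}. (cmod (quadratic_pair_sum f g s))^2)
       \<le> real CARD('a) ^ (3 * CARD('n)) * (real CARD('a) * (\<Sum>r\<in>UNIV. (cmod (sphere_pairing f g r))^2))"
proof -
  define \<phi> where "\<phi> u = - 1 / (4 * u)" for u :: 'a
  have "\<phi> (\<phi> u) = u" and "\<phi> u \<noteq> 0" if "u \<noteq> 0" for u
    using that four_nonzero by (simp_all add: \<phi>_def field_simps)
  then have "(\<Sum>s\<in>UNIV - {0}. (cmod (quadratic_pair_sum f g s))^2)
      = (\<Sum>u\<in>UNIV - {0}. (cmod (quadratic_pair_sum f g (\<phi> u)))^2)"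
    by (intro sum.reindex_bij_witness[of _ \<phi> \<phi>]) auto
  also have "\<dots> = (\<Sum>u\<in>UNIV - {0}. real CARD('a) ^ (3 * CARD('n))
                      * (cmod (\<Sum>r\<in>UNIV. chr (r * u) * sphere_pairing f g r))^2)"
    by (intro sum.cong refl, unfold \<phi>_def, rule norm_quadratic_pair_sum_squared) auto
  also have "\<dots> \<le> (\<Sum>u\<in>UNIV. real CARD('a) ^ (3 * CARD('n))
                      * (cmod (\<Sum>r\<in>UNIV. chr (r * u) * sphere_pairing f g r))^2)"
    by (intro sum_mono2) auto
  also have "\<dots> = real CARD('a) ^ (3 * CARD('n)) * (real CARD('a) * (\<Sum>r\<in>UNIV. (cmod (sphere_pairing f g r))^2))"
    by (simp add: sum_distrib_left[symmetric] parseval)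
  finally show ?thesis .
qed

end

theorem mainTheorem8:
  fixes chr :: "'a::{finite,field} \<Rightarrow> complex"
    and E F :: "('a^'n) set"
  assumes "CHAR('a) > 2"
    and "additive_character chr"
    and "nontrivial_character chr"
    and "CARD('n) \<ge> 2"
  shows "(\<Sum>t\<in>UNIV. (real (dist_count E F t))^2)
     \<le> (real (card E))^2 * (real (card F))^2 / real CARD('a)
       + real CARD('a) ^ (3 * CARD('n)) *
         (\<Sum>r\<in>UNIV. (cmod (\<Sum>m\<in>sphere_q r. cnj (fhat chr (indic E) m) * fhat chr (indic F) m))^2)"
proof -
  have "(2::'a) \<noteq> 0"
    using assms(1) of_nat_eq_0_iff_char_dvd[of 2, where 'a = 'a] by (auto dest: dvd_imp_le)
  then interpret odd_char_additive_character chr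
    using assms(2,3) unfolding additive_character_def nontrivial_character_def
    by unfold_locales auto
  let ?P = "quadratic_pair_sum (indic E) (indic F)"
  have "(\<Sum>s\<in>UNIV. (cmod (?P s))^2)
      = (real (card E))^2 * (real (card F))^2 + (\<Sum>s\<in>UNIV - {0}. (cmod (?P s))^2)"
    by (simp add: sum.remove[of UNIV 0] quadratic_pair_sum_indic_zero norm_mult power_mult_distrib)
  moreover have "(\<Sum>s\<in>UNIV - {0}. (cmod (?P s))^2) / real CARD('a)
      \<le> real CARD('a) ^ (3 * CARD('n)) * (\<Sum>r\<in>UNIV. (cmod (sphere_pairing (indic E) (indic F) r))^2)"
    using sum_norm_quadratic_pair_sum_nonzero_le[of "indic E" "indic F"]
    by (simp add: pos_divide_le_eq mult_ac)
  ultimately show ?thesis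
    by (simp add: sum_dist_count_squared sphere_pairing_def add_divide_distrib)
qed

end
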